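(* Let $\Gamma\le\mathrm{Iso}(\mathbb{R}^{r,s})$ be a subgroup whose centralizer in $\mathrm{Iso}(\mathbb{R}^{r,s})$ has an open orbit in $\mathbb{R}^{r,s}$, let $\Delta$ be the center of $\Gamma$ and $U_0=U_\Gamma\cap U_\Gamma^\perp$. Then $\mathbb{R}^{r,s}\supseteq U_\Delta^\perp\supseteq U_0\supseteq\{0\}$, and for every $(I+A,v)\in\Gamma$: $A(\mathbb{R}^{r,s})\subseteq U_\Delta^\perp$, $A(U_\Delta^\perp)\subseteq U_0$, and $A(U_0)=\{0\}$.
   Context: $\mathbb{R}^{r,s}$ denotes $\mathbb{R}^{n}$, $n=r+s$, with a nondegenerate symmetric bilinear form $\langle\cdot,\cdot\rangle$ of signature $(r,s)$; $\mathrm{Iso}(\mathbb{R}^{r,s})$ is its group of affine isometries, whose elements are written $\gamma=(I+A,v)\colon x\mapsto(I+A)x+v$. For a subset $\Lambda$ of $\Gamma$, $U_\Lambda=\sum_{(I+A,v)\in\Lambda}\operatorname{im}A$; $\perp$ denotes orthogonal complement with respect to $\langle\cdot,\cdot\rangle$. Known facts (Wolf) for such $\Gamma$: every $(I+A,v)\in\Gamma$ satisfies $A^2=0$, $Av=0$, $\langle Ax,y\rangle=-\langle x,Ay\rangle$, $\ker A=(\operatorname{im}A)^\perp$, $\operatorname{im}A$ totally isotropic; for $\gamma_i=(I+A_i,v_i)\in\Gamma$ one has $A_1A_2A_3=0$ and $[\gamma_1,\gamma_2]=(I+2A_1A_2,2A_1v_2)$. *)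

theory Defs
  imports "HOL-Analysis.Analysis"
begin

text \<open>The pseudo-Euclidean space R^{r,s} is modelled as real^'n with the form
  <x,y> = sum_i eps i * x_i * y_i, where eps i \<in> {1,-1} (r of them equal -1 or 1
  according to the signature; every signature arises this way).\<close>

definition pform :: "('n::finite \<Rightarrow> real) \<Rightarrow> real^'n \<Rightarrow> real^'n \<Rightarrow> real" where
  "pform eps x y = (\<Sum>i\<in>UNIV. eps i * x$i * y$i)"

definition signature_ok :: "('n::finite \<Rightarrow> real) \<Rightarrow> bool" where
  "signature_ok eps \<longleftrightarrow> (\<forall>i. eps i = 1 \<or> eps i = -1)"

text \<open>Affine maps x \<mapsto> M x + v, represented as pairs (M, v); M = I + A.\<close>

type_synonym 'n aff = "(real^'n^'n) \<times> (real^'n)"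

definition aff_apply :: "'n::finite aff \<Rightarrow> real^'n \<Rightarrow> real^'n" where
  "aff_apply g x = fst g *v x + snd g"

definition aff_comp :: "'n::finite aff \<Rightarrow> 'n aff \<Rightarrow> 'n aff" where
  "aff_comp g h = (fst g ** fst h, fst g *v snd h + snd g)"

definition aff_id :: "'n::finite aff" where
  "aff_id = (mat 1, 0)"

definition lin_part :: "'n::finite aff \<Rightarrow> real^'n^'n" where
  "lin_part g = fst g - mat 1"

text \<open>The isometry group Iso(R^{r,s}): affine maps whose linear part preserves the form
  (such a linear part is automatically invertible since the form is nondegenerate).\<close>

definition Iso :: "('n::finite \<Rightarrow> real) \<Rightarrow> 'n aff set" where
  "Iso eps = {g. \<forall>x y. pform eps (fst g *v x) (fst g *v y) = pform eps x y}"

definition is_subgroup :: "('n::finite \<Rightarrow> real) \<Rightarrow> 'n aff set \<Rightarrow> bool" where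
  "is_subgroup eps G \<longleftrightarrow> G \<subseteq> Iso eps \<and> aff_id \<in> G \<and>
     (\<forall>g\<in>G. \<forall>h\<in>G. aff_comp g h \<in> G) \<and>
     (\<forall>g\<in>G. \<exists>h\<in>G. aff_comp g h = aff_id \<and> aff_comp h g = aff_id)"

definition centralizer :: "('n::finite \<Rightarrow> real) \<Rightarrow> 'n aff set \<Rightarrow> 'n aff set" where
  "centralizer eps G = {c \<in> Iso eps. \<forall>g\<in>G. aff_comp c g = aff_comp g c}"

definition center :: "'n::finite aff set \<Rightarrow> 'n aff set" where
  "center G = {c \<in> G. \<forall>g\<in>G. aff_comp c g = aff_comp g c}"

definition orbit :: "'n::finite aff set \<Rightarrow> real^'n \<Rightarrow> (real^'n) set" where
  "orbit H x = (\<lambda>g. aff_apply g x) ` H"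

definition has_open_orbit :: "'n::finite aff set \<Rightarrow> bool" where
  "has_open_orbit H \<longleftrightarrow> (\<exists>x. open (orbit H x))"

definition U_of :: "'n::finite aff set \<Rightarrow> (real^'n) set" where
  "U_of L = span (\<Union>g\<in>L. range (\<lambda>x. lin_part g *v x))"

definition orth :: "('n::finite \<Rightarrow> real) \<Rightarrow> (real^'n) set \<Rightarrow> (real^'n) set" where
  "orth eps S = {x. \<forall>y\<in>S. pform eps x y = 0}"

end

theory Submission
  imports Defs
begin

(* It then derives Wolf's facts from the open orbit: the displacement quadratic
   <g x - x, g x - x> is constant on orbits of the centralizer, hence constant on an open
   set, which forces <A w, A w> = 0 and <A w, v> = 0; skewness of A turns these into
   A^2 = 0 and A v = 0.  Inside the locale wolf_group the group law then yields
   A_g A_h = - A_h A_g, A_g A_h A_k = 0, A_g v_h = - A_h v_g and A_g A_h v_k = 0, from which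
   the commutator [g,h] = (I + 2 A_g A_h, 2 A_g v_h) is central, while central elements d
   satisfy A_g A_d = 0.  The three inclusions follow by pairing with the form, using
   <A_g x, A_h y> = - <x, A_g A_h y> and A_g A_h y \<in> U_Delta. *)

lemma pform_add_left [simp]: "pform e (x + y) z = pform e x z + pform e y z"
  by (simp add: pform_def sum.distrib algebra_simps)

lemma pform_add_right [simp]: "pform e z (x + y) = pform e z x + pform e z y"
  by (simp add: pform_def sum.distrib algebra_simps)

lemma pform_diff_left [simp]: "pform e (x - y) z = pform e x z - pform e y z"
  by (simp add: pform_def sum_subtractf algebra_simps)

lemma pform_diff_right [simp]: "pform e z (x - y) = pform e z x - pform e z y"
  by (simp add: pform_def sum_subtractf algebra_simps)

lemma pform_scale_left [simp]: "pform e (c *\<^sub>R x) z = c * pform e x z"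
  by (simp add: pform_def sum_distrib_left algebra_simps)

lemma pform_scale_right [simp]: "pform e z (c *\<^sub>R x) = c * pform e z x"
  by (simp add: pform_def sum_distrib_left algebra_simps)

lemma pform_neg_left [simp]: "pform e (- x) z = - pform e x z"
  by (simp add: pform_def sum_negf)

lemma pform_neg_right [simp]: "pform e z (- x) = - pform e z x"
  by (simp add: pform_def sum_negf)

lemma pform_zero [simp]: "pform e 0 z = 0" "pform e z 0 = 0"
  by (simp_all add: pform_def)

lemma pform_sym: "pform e x y = pform e y x"
  by (simp add: pform_def algebra_simps)

text \<open>A diagonal form with nonzero coefficients is nondegenerate: test against the
  coordinate vectors.\<close>

lemma pform_nondegenerate:
  assumes "\<And>i. e i \<noteq> 0" and "\<And>y. pform e x y = 0"
  shows "x = 0"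
proof -
  have "x $ i = 0" for i
  proof -
    have "pform e x (axis i 1) = e i * x $ i"
      by (simp add: pform_def axis_def if_distrib sum.delta cong: if_cong)
    then show ?thesis using assms by (metis mult_eq_0_iff)
  qed
  then show ?thesis by (simp add: vec_eq_iff)
qed

lemma orth_span: "orth e (span S) = orth e S"
proof
  show "orth e (span S) \<subseteq> orth e S"
    unfolding orth_def using span_base by blast
  show "orth e S \<subseteq> orth e (span S)"
  proof
    fix x assume x: "x \<in> orth e S"
    have "pform e x y = 0" if "y \<in> span S" for y
      using that by (induction rule: span_induct_alt) (use x in \<open>auto simp: orth_def\<close>)
    then show "x \<in> orth e (span S)" by (simp add: orth_def)
  qed
qed

subsection \<open>Affine maps written as x \<mapsto> x + A x + v\<close>

definition lpart :: "'n::finite aff \<Rightarrow> real^'n \<Rightarrow> real^'n" where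
  "lpart g x = lin_part g *v x"

lemma lpart_add [simp]: "lpart g (x + y) = lpart g x + lpart g y"
  by (simp add: lpart_def algebra_simps)

lemma lpart_diff [simp]: "lpart g (x - y) = lpart g x - lpart g y"
  by (simp add: lpart_def algebra_simps)

lemma lpart_scale [simp]: "lpart g (c *\<^sub>R x) = c *\<^sub>R lpart g x"
  by (simp add: lpart_def algebra_simps)

lemma lpart_neg [simp]: "lpart g (- x) = - lpart g x"
  using lpart_scale[of g "-1" x] by simp

lemma lpart_zero [simp]: "lpart g 0 = 0"
  by (simp add: lpart_def)

lemma fst_mult_lpart: "fst g *v x = x + lpart g x"
  by (simp add: lpart_def lin_part_def algebra_simps)

lemma aff_apply_lpart: "aff_apply g x = x + lpart g x + snd g"
  by (simp add: aff_apply_def fst_mult_lpart)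

lemma aff_apply_comp: "aff_apply (aff_comp g h) x = aff_apply g (aff_apply h x)"
  by (simp add: aff_apply_def aff_comp_def matrix_vector_mul_assoc algebra_simps)

lemma aff_id_apply [simp]: "aff_apply aff_id x = x"
  by (simp add: aff_apply_def aff_id_def)

lemma aff_ext:
  assumes "\<And>x. aff_apply g x = aff_apply h x"
  shows "g = h"
proof -
  have "snd g = snd h" using assms[of 0] by (simp add: aff_apply_def)
  moreover have "fst g = fst h"
    unfolding matrix_eq using assms calculation by (simp add: aff_apply_def)
  ultimately show ?thesis by (simp add: prod_eq_iff)
qed

lemma lpart_via_apply: "lpart g x = aff_apply g x - x - aff_apply g 0"
  by (simp add: aff_apply_lpart)

lemma snd_via_apply: "snd g = aff_apply g 0"
  by (simp add: aff_apply_def)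

lemma lpart_comp: "lpart (aff_comp g h) x = lpart g x + lpart h x + lpart g (lpart h x)"
  unfolding lpart_via_apply[of "aff_comp g h"] aff_apply_comp
  by (simp add: aff_apply_lpart algebra_simps)

lemma snd_comp: "snd (aff_comp g h) = snd h + lpart g (snd h) + snd g"
  by (simp add: aff_comp_def fst_mult_lpart)

lemma aff_comp_commute_iff:
  "aff_comp k f = aff_comp f k \<longleftrightarrow>
     (\<forall>x. lpart k (lpart f x) = lpart f (lpart k x)) \<and> lpart k (snd f) = lpart f (snd k)"
proof
  assume comm: "aff_comp k f = aff_comp f k"
  have "lpart (aff_comp k f) x = lpart (aff_comp f k) x" for x
    using comm by simp
  then have "\<forall>x. lpart k (lpart f x) = lpart f (lpart k x)"
    unfolding lpart_comp by (simp add: algebra_simps)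
  moreover have "lpart k (snd f) = lpart f (snd k)"
    using arg_cong[OF comm, of snd] unfolding snd_comp by (simp add: algebra_simps)
  ultimately show "(\<forall>x. lpart k (lpart f x) = lpart f (lpart k x)) \<and>
      lpart k (snd f) = lpart f (snd k)" ..
next
  assume "(\<forall>x. lpart k (lpart f x) = lpart f (lpart k x)) \<and> lpart k (snd f) = lpart f (snd k)"
  then show "aff_comp k f = aff_comp f k"
    by (intro aff_ext) (simp add: aff_apply_lpart lpart_comp snd_comp algebra_simps)
qed

lemma Iso_expand:
  assumes "g \<in> Iso e"
  shows "pform e (lpart g x) y + pform e x (lpart g y) + pform e (lpart g x) (lpart g y) = 0"
proof -
  have "pform e (fst g *v x) (fst g *v y) = pform e x y"
    using assms by (simp add: Iso_def)
  then show ?thesis unfolding fst_mult_lpart by (simp add: algebra_simps)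
qed

lemma aff_id_in_centralizer: "aff_id \<in> centralizer e G"
proof -
  have "aff_id \<in> Iso e" by (simp add: Iso_def aff_id_def)
  moreover have "aff_comp aff_id g = aff_comp g aff_id" for g :: "'n::finite aff"
    by (rule aff_ext) (simp add: aff_apply_comp)
  ultimately show ?thesis unfolding centralizer_def by blast
qed

subsection \<open>Consequences of an open orbit of the centralizer\<close>

definition displacement :: "'n::finite aff \<Rightarrow> real^'n \<Rightarrow> real^'n" where
  "displacement g x = aff_apply g x - x"

text \<open>An isometry commuting with g carries displacements of g to displacements of g, so
  the squared displacement of g is invariant under it.\<close>

lemma displacement_invariant:
  assumes "c \<in> Iso e" and "aff_comp c g = aff_comp g c"
  shows "pform e (displacement g (aff_apply c x)) (displacement g (aff_apply c x))
       = pform e (displacement g x) (displacement g x)"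
proof -
  have "aff_apply g (aff_apply c x) = aff_apply c (aff_apply g x)"
    using assms(2) by (metis aff_apply_comp)
  then have "displacement g (aff_apply c x) = fst c *v displacement g x"
    by (simp add: displacement_def aff_apply_def algebra_simps)
  then show ?thesis using assms(1) by (simp add: Iso_def)
qed

lemma displacement_line:
  "displacement g (x + t *\<^sub>R w) = displacement g x + t *\<^sub>R lpart g w"
  by (simp add: displacement_def aff_apply_lpart algebra_simps)

text \<open>If the squared displacement of g is constant on an open set, then it is constant
  along every line through a point x0 of the set.  Its expansion
  Q(x0) + 2t <A w, d> + t^2 <A w, A w> in t then forces both coefficients to vanish.\<close>

lemma constant_displacement_isotropic:
  assumes "open S" and "x0 \<in> S"
    and const: "\<And>y. y \<in> S \<Longrightarrow>
      pform e (displacement g y) (displacement g y) = pform e (displacement g x0) (displacement g x0)"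
  shows "pform e (lpart g w) (lpart g w) = 0 \<and> pform e (lpart g w) (displacement g x0) = 0"
proof -
  obtain r where r: "r > 0" "ball x0 r \<subseteq> S"
    using assms(1,2) open_contains_ball by blast
  define s where "s = r / (norm w + 1)"
  have s: "s > 0" using r(1) by (simp add: s_def add_nonneg_pos)
  have "\<bar>t\<bar> * norm w < r" if "\<bar>t\<bar> = s" for t
  proof -
    have "\<bar>t\<bar> * norm w = r * (norm w / (norm w + 1))"
      using that by (simp add: s_def)
    also have "\<dots> < r * 1"
      using r(1) by (intro mult_strict_left_mono) (simp_all add: divide_less_eq_1 add_nonneg_pos)
    finally show ?thesis by simp
  qed
  then have on_line: "x0 + t *\<^sub>R w \<in> S" if "\<bar>t\<bar> = s" for t
    using that r(2) by (auto simp: dist_norm)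
  define a where "a = pform e (lpart g w) (lpart g w)"
  define b where "b = pform e (lpart g w) (displacement g x0)"
  have "t * (2 * b + t * a) = 0" if "\<bar>t\<bar> = s" for t
    using const[OF on_line[OF that]] unfolding displacement_line
    by (simp add: a_def b_def pform_sym[of e "displacement g x0" "lpart g w"] algebra_simps)
  from this[of s] this[of "- s"] s have "2 * b + s * a = 0" "2 * b - s * a = 0"
    by simp_all
  then show ?thesis using s by (simp add: a_def b_def)
qed

text \<open>Vanishing of a quadratic form on the image of A polarizes to the bilinear form.\<close>

lemma isotropic_image:
  assumes "\<And>w. pform e (lpart g w) (lpart g w) = 0"
  shows "pform e (lpart g x) (lpart g y) = 0"
proof -
  have "pform e (lpart g (x + y)) (lpart g (x + y)) =
      2 * pform e (lpart g x) (lpart g y)"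
    using assms[of x] assms[of y] by (simp add: pform_sym[of e "lpart g y" "lpart g x"])
  then show ?thesis using assms[of "x + y"] by simp
qed

lemma open_orbit_isotropic:
  assumes "has_open_orbit (centralizer e G)" and "g \<in> G"
  shows "pform e (lpart g x) (lpart g y) = 0" and "pform e (lpart g x) (snd g) = 0"
proof -
  obtain x0 where op: "open (orbit (centralizer e G) x0)"
    using assms(1) by (auto simp: has_open_orbit_def)
  have x0: "x0 \<in> orbit (centralizer e G) x0"
    unfolding orbit_def using aff_id_in_centralizer by (metis aff_id_apply image_eqI)
  have "pform e (displacement g y) (displacement g y) =
        pform e (displacement g x0) (displacement g x0)"
    if y: "y \<in> orbit (centralizer e G) x0" for y
  proof -
    obtain c where c: "c \<in> centralizer e G" "y = aff_apply c x0"
      using y unfolding orbit_def by blast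
    then show ?thesis
      using assms(2) displacement_invariant[of c e g x0] by (simp add: centralizer_def)
  qed
  note iso = constant_displacement_isotropic[OF op x0 this]
  have image_isotropic: "pform e (lpart g x) (lpart g y) = 0" for x y
    using iso isotropic_image by blast
  then show "pform e (lpart g x) (lpart g y) = 0" for x y .
  have "displacement g x0 = lpart g x0 + snd g"
    by (simp add: displacement_def aff_apply_lpart)
  then show "pform e (lpart g x) (snd g) = 0" for x
    using iso[of x] image_isotropic[of x x0] by simp
qed

subsection \<open>Groups of isometries whose centralizer has an open orbit\<close>

locale wolf_group =
  fixes e :: "'n::finite \<Rightarrow> real" and G :: "'n aff set"
  assumes signature: "signature_ok e" and subgroup: "is_subgroup e G"
    and open_orbit: "has_open_orbit (centralizer e G)"
begin

lemma in_Iso: "g \<in> G \<Longrightarrow> g \<in> Iso e"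
  using subgroup by (auto simp: is_subgroup_def)

lemma comp_closed: "g \<in> G \<Longrightarrow> h \<in> G \<Longrightarrow> aff_comp g h \<in> G"
  using subgroup by (auto simp: is_subgroup_def)

lemma nondegenerate: "(\<And>y. pform e x y = 0) \<Longrightarrow> x = 0"
  using pform_nondegenerate[of e x] signature
  by (metis signature_ok_def zero_neq_neg_one zero_neq_one)

lemma isotropic [simp]: "g \<in> G \<Longrightarrow> pform e (lpart g x) (lpart g y) = 0"
  using open_orbit_isotropic(1)[OF open_orbit] by blast

text \<open>A is skew-adjoint: this is the isometry condition once the image is isotropic.\<close>

lemma skew: "g \<in> G \<Longrightarrow> pform e (lpart g x) y = - pform e x (lpart g y)"
  using Iso_expand[OF in_Iso, of g x y] by simp

lemma square_zero [simp]:
  assumes g: "g \<in> G"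
  shows "lpart g (lpart g x) = 0"
proof (rule nondegenerate)
  show "pform e (lpart g (lpart g x)) y = 0" for y
    using skew[OF g, of "lpart g x" y] g by simp
qed

lemma kills_translation [simp]:
  assumes g: "g \<in> G"
  shows "lpart g (snd g) = 0"
proof (rule nondegenerate)
  show "pform e (lpart g (snd g)) y = 0" for y
    using skew[OF g, of "snd g" y] pform_sym[of e "snd g" "lpart g y"]
      open_orbit_isotropic(2)[OF open_orbit g] by simp
qed

text \<open>Since A^2 = 0 and A v = 0, the inverse of (I + A, v) is (I - A, - v).\<close>

lemma inverse:
  assumes "g \<in> G"
  obtains g' where "g' \<in> G" "\<And>x. lpart g' x = - lpart g x" "snd g' = - snd g"
proof -
  obtain h where h: "h \<in> G" "aff_comp g h = aff_id"
    using subgroup assms unfolding is_subgroup_def by blast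
  have "aff_apply h y = y - lpart g y - snd g" for y
  proof -
    define u where "u = aff_apply h y"
    have "aff_apply g u = y"
      using h(2) aff_apply_comp[of g h y] by (simp add: u_def)
    then have u: "u + lpart g u + snd g = y" by (simp add: aff_apply_lpart)
    then have "lpart g u = lpart g y"
      using assms by (metis add_0_right kills_translation lpart_add square_zero)
    then show ?thesis using u by (simp add: u_def algebra_simps)
  qed
  then have "lpart h x = - lpart g x" "snd h = - snd g" for x
    unfolding lpart_via_apply[of h] snd_via_apply[of h] by simp_all
  then show ?thesis using that h(1) by blast
qed

text \<open>Linear parts of two elements anticommute: isotropy of the image of A_{gh}.\<close>

lemma anticommute:
  assumes g: "g \<in> G" and h: "h \<in> G"
  shows "lpart g (lpart h x) = - lpart h (lpart g x)"
proof -
  have cross: "pform e (lpart g u) (lpart h v) + pform e (lpart h u) (lpart g v) = 0" for u v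
    using isotropic[OF comp_closed[OF g h], of u v] g h
    unfolding lpart_comp by (simp add: skew)
  have "lpart g (lpart h x) + lpart h (lpart g x) = 0"
  proof (rule nondegenerate)
    show "pform e (lpart g (lpart h x) + lpart h (lpart g x)) y = 0" for y
      using cross[of x y] g h pform_sym[of e "lpart h x" "lpart g y"]
        pform_sym[of e "lpart g x" "lpart h y"] by (simp add: skew)
  qed
  then show ?thesis by (simp add: eq_neg_iff_add_eq_0)
qed

text \<open>Products of three linear parts vanish: anticommute A_{gh} with A_k.\<close>

lemma triple_zero:
  assumes g: "g \<in> G" and h: "h \<in> G" and k: "k \<in> G"
  shows "lpart g (lpart h (lpart k x)) = 0"
proof -
  have "lpart g (lpart k x) + lpart h (lpart k x) + lpart g (lpart h (lpart k x))
      = - (lpart k (lpart g x) + lpart k (lpart h x) + lpart k (lpart g (lpart h x)))"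
    using anticommute[OF comp_closed[OF g h] k, of x] unfolding lpart_comp by simp
  moreover have "lpart k (lpart g (lpart h x)) = lpart g (lpart h (lpart k x))"
    using anticommute[OF k g] anticommute[OF k h] by simp
  moreover have "lpart g (lpart k x) = - lpart k (lpart g x)"
    and "lpart h (lpart k x) = - lpart k (lpart h x)"
    using anticommute[OF g k] anticommute[OF h k] by simp_all
  ultimately have "(2::real) *\<^sub>R lpart g (lpart h (lpart k x)) = 0"
    by (simp add: algebra_simps scaleR_2)
  then show ?thesis by simp
qed

text \<open>A_{gh} v_{gh} = 0, expanded; combined with the same identity for g^{-1} it gives
  A_g A_h v_g = 0 and then the exchange rule A_g v_h = - A_h v_g.\<close>

lemma product_kills_translation:
  assumes g: "g \<in> G" and h: "h \<in> G"
  shows "lpart g (snd h) + lpart h (lpart g (snd h)) + lpart h (snd g)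
    + lpart g (lpart h (snd g)) = 0"
  using kills_translation[OF comp_closed[OF g h]] g h triple_zero[OF g h g]
  unfolding lpart_comp snd_comp by (simp add: algebra_simps)

lemma double_on_own_translation:
  assumes g: "g \<in> G" and h: "h \<in> G"
  shows "lpart g (lpart h (snd g)) = 0"
proof -
  obtain g' where g': "g' \<in> G" "\<And>x. lpart g' x = - lpart g x" "snd g' = - snd g"
    using inverse[OF g] by blast
  have "(2::real) *\<^sub>R lpart g (lpart h (snd g)) = 0"
    using product_kills_translation[OF g h] product_kills_translation[OF g'(1) h]
    unfolding g'(2,3) by (simp add: algebra_simps scaleR_2)
  then show ?thesis by simp
qed

lemma translation_exchange:
  assumes g: "g \<in> G" and h: "h \<in> G"
  shows "lpart g (snd h) = - lpart h (snd g)"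
  using product_kills_translation[OF g h] double_on_own_translation[OF g h]
    double_on_own_translation[OF h g]
  by (simp add: eq_neg_iff_add_eq_0)

lemma double_on_translation:
  assumes g: "g \<in> G" and h: "h \<in> G" and k: "k \<in> G"
  shows "lpart g (lpart h (snd k)) = 0"
proof -
  have "lpart g (lpart h (snd k)) + lpart k (lpart g (snd h)) = 0"
    using translation_exchange[OF comp_closed[OF g h] k] translation_exchange[OF k h]
      translation_exchange[OF k g]
    unfolding lpart_comp snd_comp by (simp add: algebra_simps)
  moreover have "lpart k (lpart g (snd h)) = lpart g (lpart h (snd k))"
    using anticommute[OF k g] translation_exchange[OF k h] by simp
  ultimately have "(2::real) *\<^sub>R lpart g (lpart h (snd k)) = 0"
    by (simp add: scaleR_2)
  then show ?thesis by simp
qed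

text \<open>The commutator g h g^{-1} h^{-1} equals (I + 2 A_g A_h, 2 A_g v_h); by the identities
  above it commutes with every element of G.\<close>

lemma commutator_in_center:
  assumes g: "g \<in> G" and h: "h \<in> G"
  obtains k where "k \<in> center G" "\<And>y. lpart k y = 2 *\<^sub>R lpart g (lpart h y)"
proof -
  obtain g' where g': "g' \<in> G" "\<And>x. lpart g' x = - lpart g x" "snd g' = - snd g"
    using inverse[OF g] by blast
  obtain h' where h': "h' \<in> G" "\<And>x. lpart h' x = - lpart h x" "snd h' = - snd h"
    using inverse[OF h] by blast
  define k where "k = aff_comp (aff_comp g h) (aff_comp g' h')"
  have kG: "k \<in> G" unfolding k_def using comp_closed g h g' h' by blast
  have k_apply: "aff_apply k y = y + 2 *\<^sub>R lpart g (lpart h y) + 2 *\<^sub>R lpart g (snd h)" for y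
  proof -
    define z where "z = aff_apply g' (aff_apply h' y)"
    have z: "z = y - lpart h y - snd h - lpart g y + lpart g (lpart h y) + lpart g (snd h) - snd g"
      unfolding z_def aff_apply_lpart g'(2,3) h'(2,3) by (simp add: algebra_simps)
    have hz: "lpart h z = lpart h y + lpart g (lpart h y) - lpart h (snd g)"
      unfolding z using h anticommute[OF h g, of y] triple_zero[OF h g h, of y]
        double_on_own_translation[OF h g] by (simp add: algebra_simps)
    define w where "w = aff_apply h z"
    have w: "w = y - lpart g y + 2 *\<^sub>R lpart g (lpart h y) + 2 *\<^sub>R lpart g (snd h) - snd g"
      unfolding w_def aff_apply_lpart hz using translation_exchange[OF h g] z
      by (simp add: algebra_simps scaleR_2)
    have gw: "lpart g w = lpart g y"
      unfolding w using g by simp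
    have "aff_apply k y = aff_apply g w"
      unfolding k_def aff_apply_comp w_def z_def ..
    also have "\<dots> = w + lpart g y + snd g"
      by (simp only: aff_apply_lpart gw)
    finally show ?thesis
      unfolding w by (simp add: algebra_simps)
  qed
  have lpart_k: "lpart k y = 2 *\<^sub>R lpart g (lpart h y)" for y
    unfolding lpart_via_apply[of k] k_apply by simp
  have snd_k: "snd k = 2 *\<^sub>R lpart g (snd h)"
    unfolding snd_via_apply[of k] k_apply by simp
  have "aff_comp k f = aff_comp f k" if f: "f \<in> G" for f
    unfolding aff_comp_commute_iff lpart_k snd_k
    using triple_zero[OF g h f] triple_zero[OF f g h] double_on_translation[OF g h f]
      double_on_translation[OF f g h] by simp
  with kG have "k \<in> center G" by (simp add: center_def)
  then show ?thesis using that lpart_k by blast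
qed

text \<open>Central elements d satisfy A_g A_d = 0: A_g and A_d both commute and anticommute.\<close>

lemma center_annihilated:
  assumes g: "g \<in> G" and d: "d \<in> center G"
  shows "lpart g (lpart d x) = 0"
proof -
  have "d \<in> G" "aff_comp d g = aff_comp g d" using d g by (auto simp: center_def)
  then have "lpart g (lpart d x) = - lpart g (lpart d x)"
    using anticommute[OF g, of d x] by (simp add: aff_comp_commute_iff)
  then have "(2::real) *\<^sub>R lpart g (lpart d x) = 0"
    by (simp add: scaleR_2 eq_neg_iff_add_eq_0)
  then show ?thesis by simp
qed

lemma orth_U_of: "orth e (U_of L) = {x. \<forall>g\<in>L. \<forall>y. pform e x (lpart g y) = 0}"
  unfolding U_of_def orth_span by (auto simp: orth_def lpart_def)

lemma lpart_in_U_of: "g \<in> L \<Longrightarrow> lpart g x \<in> U_of L"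
  unfolding U_of_def lpart_def by (intro span_base) blast

text \<open>The three inclusions of the proposition.  First, A_g R^{r,s} \<subseteq> U_Delta^\<perp>, since
  <A_g x, A_d y> = - <x, A_g A_d y> = 0 for central d.\<close>

lemma image_in_orth_center:
  "g \<in> G \<Longrightarrow> lpart g x \<in> orth e (U_of (center G))"
  unfolding orth_U_of by (simp add: skew center_annihilated)

text \<open>Second, A_g maps U_Delta^\<perp> into U0: A_g A_h y is half the linear part of a central
  commutator, so <A_g x, A_h y> = - <x, A_g A_h y> = 0.\<close>

lemma orth_center_to_U0:
  assumes g: "g \<in> G" and x: "x \<in> orth e (U_of (center G))"
  shows "lpart g x \<in> U_of G \<inter> orth e (U_of G)"
proof -
  have "pform e (lpart g x) (lpart h y) = 0" if h: "h \<in> G" for h y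
  proof -
    obtain k where k: "k \<in> center G" "\<And>y. lpart k y = 2 *\<^sub>R lpart g (lpart h y)"
      using commutator_in_center[OF g h] by blast
    have "pform e x (lpart k y) = 0" using x k(1) unfolding orth_U_of by blast
    then show ?thesis using k(2) by (simp add: skew[OF g])
  qed
  then show ?thesis unfolding orth_U_of using lpart_in_U_of[OF g] by blast
qed

text \<open>Third, A_g kills U0 \<subseteq> U_Gamma^\<perp>, by skewness and nondegeneracy.\<close>

lemma U0_annihilated:
  assumes g: "g \<in> G" and x: "x \<in> U_of G \<inter> orth e (U_of G)"
  shows "lpart g x = 0"
proof (rule nondegenerate)
  fix y
  show "pform e (lpart g x) y = 0"
    using x g unfolding orth_U_of by (simp add: skew[OF g])
qed

end

theorem proposition4p3:
  fixes eps :: "'n::finite \<Rightarrow> real" and \<Gamma> :: "'n aff set"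
  assumes "signature_ok eps"
    and "is_subgroup eps \<Gamma>"
    and "has_open_orbit (centralizer eps \<Gamma>)"
  defines "U0 \<equiv> U_of \<Gamma> \<inter> orth eps (U_of \<Gamma>)"
  shows "UNIV \<supseteq> orth eps (U_of (center \<Gamma>)) \<and> orth eps (U_of (center \<Gamma>)) \<supseteq> U0 \<and> U0 \<supseteq> {0}
    \<and> (\<forall>g\<in>\<Gamma>. (\<lambda>x. lin_part g *v x) ` UNIV \<subseteq> orth eps (U_of (center \<Gamma>))
              \<and> (\<lambda>x. lin_part g *v x) ` orth eps (U_of (center \<Gamma>)) \<subseteq> U0
              \<and> (\<lambda>x. lin_part g *v x) ` U0 = {0})"
proof -
  interpret wolf_group eps \<Gamma> using assms(1-3) by unfold_locales
  have lpart_eq: "(\<lambda>x. lin_part g *v x) = lpart g" for g :: "'n aff"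
    by (simp add: lpart_def [abs_def])
  have "U0 \<subseteq> orth eps (U_of (center \<Gamma>))"
    unfolding U0_def orth_U_of center_def by blast
  moreover have "0 \<in> U0"
    unfolding U0_def by (simp add: U_of_def span_zero orth_def)
  moreover have "lpart g ` U0 = {0}" if "g \<in> \<Gamma>" for g
    using U0_annihilated[OF that] \<open>0 \<in> U0\<close> unfolding U0_def by force
  ultimately show ?thesis
    unfolding lpart_eq U0_def
    using image_in_orth_center orth_center_to_U0 by blast
qed

end
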